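(* Let $\mathcal{G}=(\mathcal{V},\mathcal{E})$ be an unweighted finite simple graph and $f:\mathcal{V}\to\mathbb{R}$ a filtering function. Let $u\in\mathcal{V}$ be dominated by $v\in\mathcal{V}$ with $f(u)\leq f(v)$. Then for every $k\ge 0$, the $k$-th persistence diagrams of the superlevel filtrations of $\mathcal{G}$ and of $\mathcal{G}-\{u\}$ (with $f$ restricted and the same thresholds) coincide: $PD^{\mathrm{v}}_k(\mathcal{G},f)=PD^{\mathrm{v}}_k(\mathcal{G}-\{u\},f)$. In particular, if $f$ is the degree function of $\mathcal{G}$, this holds for every dominated vertex $u$.
   Context: $N(w)$ is the closed neighborhood of $w$; $u$ is dominated by $v\ne u$ if $N(u)\subset N(v)$. $\mathcal{G}-\{u\}$ deletes $u$ and its incident edges. With thresholds $\alpha_0<\dots<\alpha_m$ spanning the range of $f$, the superlevel filtration consists of the clique (flag) complexes of the subgraphs induced by $\{w: f(w)\ge\alpha_i\}$, ordered by decreasing $\alpha_i$; $PD^{\mathrm{v}}_k$ is the $k$-th persistence diagram (field coefficients) of this filtration. *)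

theory Defs
  imports Complex_Main "HOL-Library.Function_Algebras"
begin

definition simple_graph :: "'v set \<Rightarrow> 'v set set \<Rightarrow> bool" where
  "simple_graph V E \<longleftrightarrow> finite V \<and> (\<forall>e\<in>E. e \<subseteq> V \<and> card e = 2)"

definition closed_nbhd :: "'v set set \<Rightarrow> 'v \<Rightarrow> 'v set" where
  "closed_nbhd E w = insert w {x. {w, x} \<in> E}"

definition dominated_by :: "'v set \<Rightarrow> 'v set set \<Rightarrow> 'v \<Rightarrow> 'v \<Rightarrow> bool" where
  "dominated_by V E u v \<longleftrightarrow> u \<in> V \<and> v \<in> V \<and> u \<noteq> v \<and> closed_nbhd E u \<subseteq> closed_nbhd E v"

definition del_vertex_V :: "'v set \<Rightarrow> 'v \<Rightarrow> 'v set" where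
  "del_vertex_V V u = V - {u}"

definition del_vertex_E :: "'v set set \<Rightarrow> 'v \<Rightarrow> 'v set set" where
  "del_vertex_E E u = {e \<in> E. u \<notin> e}"

definition degree :: "'v set set \<Rightarrow> 'v \<Rightarrow> real" where
  "degree E w = real (card {e \<in> E. w \<in> e})"

definition flag_complex :: "'v set set \<Rightarrow> 'v set \<Rightarrow> 'v set set" where
  "flag_complex E W = {\<sigma>. \<sigma> \<noteq> {} \<and> finite \<sigma> \<and> \<sigma> \<subseteq> W \<and>
      (\<forall>x\<in>\<sigma>. \<forall>y\<in>\<sigma>. x \<noteq> y \<longrightarrow> {x, y} \<in> E)}"

text \<open>Thresholds alpha 0 < ... < alpha m; step j of the superlevel filtration
  (j = 0..m, decreasing thresholds) is the clique complex of the subgraph induced by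
  the vertices w with f w >= alpha (m - j).\<close>
definition superlevel_filtration ::
  "'v set \<Rightarrow> 'v set set \<Rightarrow> ('v \<Rightarrow> real) \<Rightarrow> (nat \<Rightarrow> real) \<Rightarrow> nat \<Rightarrow> nat \<Rightarrow> 'v set set" where
  "superlevel_filtration V E f \<alpha> m j = flag_complex E {w \<in> V. f w \<ge> \<alpha> (m - j)}"

text \<open>Simplices are finite vertex sets, oriented by the linear order of the vertex type.
  Chains are functions from vertex sets to the field, supported on simplices.\<close>

definition chains :: "'a::field itself \<Rightarrow> nat \<Rightarrow> 'v set set \<Rightarrow> ('v set \<Rightarrow> 'a) set" where
  "chains _ k K = {c. \<forall>\<sigma>. c \<sigma> \<noteq> 0 \<longrightarrow> \<sigma> \<in> K \<and> card \<sigma> = Suc k}"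

text \<open>The boundary of 0-chains is 0 (unreduced homology).\<close>
definition boundary :: "'v::linorder set set \<Rightarrow> ('v set \<Rightarrow> 'a::field) \<Rightarrow> 'v set \<Rightarrow> 'a" where
  "boundary K c \<tau> = (if \<tau> = {} then 0 else
     (\<Sum>x\<in>\<Union>K - \<tau>. (-1) ^ card {y\<in>\<tau>. y < x} * c (insert x \<tau>)))"

definition cycles :: "'a::field itself \<Rightarrow> nat \<Rightarrow> 'v::linorder set set \<Rightarrow> ('v set \<Rightarrow> 'a) set" where
  "cycles A k K = {c \<in> chains A k K. boundary K c = 0}"

definition boundaries :: "'a::field itself \<Rightarrow> nat \<Rightarrow> 'v::linorder set set \<Rightarrow> ('v set \<Rightarrow> 'a) set" where
  "boundaries A k K = boundary K ` chains A (Suc k) K"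

definition fdim :: "'a::field itself \<Rightarrow> ('b \<Rightarrow> 'a) set \<Rightarrow> nat" where
  "fdim _ S = vector_space.dim (\<lambda>(r::'a) (c::'b \<Rightarrow> 'a) x. r * c x) S"

text \<open>Persistent Betti number beta_k^{i,j} of a filtration K 0, ..., K m (i <= j <= m):
  rank of H_k(K i) -> H_k(K j), i.e. dim Z_k(K i) - dim (Z_k(K i) \<inter> B_k(K j)).\<close>
definition pers_betti ::
  "'a::field itself \<Rightarrow> nat \<Rightarrow> (nat \<Rightarrow> 'v::linorder set set) \<Rightarrow> nat \<Rightarrow> nat \<Rightarrow> nat \<Rightarrow> int" where
  "pers_betti A k K m i j = (if i \<le> j \<and> j \<le> m then
      int (fdim A (cycles A k (K i))) - int (fdim A (cycles A k (K i) \<inter> boundaries A k (K j)))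
    else 0)"

text \<open>k-th persistence diagram of the filtration K 0 \<subseteq> ... \<subseteq> K m, as the
  multiplicity function of (birth index b, death index d) with b < d \<le> m + 1,
  d = m + 1 meaning the class never dies (essential class). Multiplicities by the
  standard inclusion-exclusion of persistent Betti numbers.\<close>
definition persistence_diagram ::
  "'a::field itself \<Rightarrow> nat \<Rightarrow> (nat \<Rightarrow> 'v::linorder set set) \<Rightarrow> nat \<Rightarrow> nat \<times> nat \<Rightarrow> int" where
  "persistence_diagram A k K m = (\<lambda>(b, d).
     if b < d \<and> d \<le> Suc m then
       pers_betti A k K m b (d - 1) - pers_betti A k K m b d
       - (if b = 0 then 0 else pers_betti A k K m (b - 1) (d - 1) - pers_betti A k K m (b - 1) d)
     else 0)"

definition PD_v ::
  "'a::field itself \<Rightarrow> nat \<Rightarrow> 'v::linorder set \<Rightarrow> 'v set set \<Rightarrow> ('v \<Rightarrow> real) \<Rightarrow> (nat \<Rightarrow> real) \<Rightarrow> nat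
     \<Rightarrow> nat \<times> nat \<Rightarrow> int" where
  "PD_v A k V E f \<alpha> m = persistence_diagram A k (superlevel_filtration V E f \<alpha> m) m"

definition thresholds_for :: "'v set \<Rightarrow> ('v \<Rightarrow> real) \<Rightarrow> (nat \<Rightarrow> real) \<Rightarrow> nat \<Rightarrow> bool" where
  "thresholds_for V f \<alpha> m \<longleftrightarrow> (\<forall>i<m. \<alpha> i < \<alpha> (Suc i)) \<and> (\<forall>w\<in>V. \<alpha> 0 \<le> f w \<and> f w \<le> \<alpha> m)"

end

(*
  If N[u] \<subseteq> N[v], every clique through u remains a clique after adding v, so in any clique
  complex containing v the simplices through u can be coned off to the apex v. At chain level
  this cone is a homotopy: subtracting the boundary of the cone of a chain whose boundary avoids
  u leaves a chain that avoids u and has the same boundary. Hence every cycle is homologous to a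
  cycle of the deletion of u, and a chain avoiding u that bounds already bounds in the deletion.
  Since f u \<le> f v, the vertex v is present at every filtration step that contains u, so this
  applies to every pair of steps K_i \<subseteq> K_j at once, and the Grassmann formula turns the two
  facts into equality of all persistent Betti numbers, hence of the persistence diagrams. For the
  degree function, N[u] \<subseteq> N[v] forces deg u \<le> deg v.
*)

theory Submission
  imports Defs
begin

context vector_space
begin

lemma independent_Un:
  assumes "independent S" "independent T" and trivial_Int: "span S \<inter> span T = {0}"
  shows "independent (S \<union> T)"
proof -
  have not_in_span: "a \<notin> span (S \<union> T - {a})"
    if indS: "independent S" and ST: "span S \<inter> span T = {0}" and a: "a \<in> S" for S T a
  proof
    assume "a \<in> span (S \<union> T - {a})"
    also have "\<dots> \<subseteq> span ((S - {a}) \<union> T)" by (rule span_mono) blast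
    finally obtain x y where x: "x \<in> span (S - {a})" and y: "y \<in> span T" and axy: "a = x + y"
      unfolding span_Un by blast
    have "y = a - x" using axy by simp
    moreover have "a - x \<in> span S"
      using a x span_mono[of "S - {a}" S] by (intro span_diff) (auto intro: span_base)
    ultimately have "y = 0" using y ST by blast
    then have "a \<in> span (S - {a})" using axy x by simp
    then show False using indS a dependent_def by blast
  qed
  have "span T \<inter> span S = {0}" using trivial_Int by blast
  then show ?thesis
    unfolding dependent_def
    using not_in_span[OF assms(1) trivial_Int] not_in_span[OF assms(2), of S] by (auto simp: Un_commute)
qed

lemma span_Int_span_of_independent:
  assumes "independent (S \<union> T)" "S \<inter> T = {}"
  shows "span S \<inter> span T = {0}"
proof -
  interpret vector_space_pair scale scale ..
  define g where "g = construct (S \<union> T) (\<lambda>b. if b \<in> S then b else 0)"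
  have lin: "Vector_Spaces.linear scale scale g"
    unfolding g_def using assms(1) by (rule linear_construct)
  have g_on_basis: "g b = (if b \<in> S then b else 0)" if "b \<in> S \<union> T" for b
    unfolding g_def using assms(1) that by (rule construct_basis)
  have "g x = id x" if "x \<in> span S" for x
    by (rule linear_eq_on[OF lin linear_id that]) (simp add: g_on_basis)
  moreover have "g x = 0" if "x \<in> span T" for x
    by (rule linear_eq_on[OF lin linear_zero that]) (use assms(2) in \<open>auto simp: g_on_basis\<close>)
  ultimately show ?thesis by (auto simp: span_zero) metis
qed

lemma dim_sums_eq_card_of_basis_extension:
  assumes "subspace S" "subspace T" "D \<subseteq> T" "T \<subseteq> span D" "P \<subseteq> S"
    and "S \<subseteq> span (D \<union> P)" "independent (D \<union> P)"
  shows "dim {x + y |x y. x \<in> S \<and> y \<in> T} = card (D \<union> P)"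
proof (rule dim_unique[OF _ _ assms(7) refl])
  show "D \<union> P \<subseteq> {x + y |x y. x \<in> S \<and> y \<in> T}"
    using assms(3,5) subspace_0[OF assms(1)] subspace_0[OF assms(2)] by force
  have "T \<subseteq> span (D \<union> P)"
    using assms(4) span_mono[of D "D \<union> P"] by blast
  then show "{x + y |x y. x \<in> S \<and> y \<in> T} \<subseteq> span (D \<union> P)"
    using assms(6) span_add by blast
qed

text \<open>The Grassmann formula; the library's \<open>dim_sums_Int\<close> needs a finite-dimensional ambient
  space, whereas chains live in an infinite-dimensional function space.\<close>
lemma dim_sums_Int_of_finite_span:
  assumes "subspace S" "subspace T" "finite F" "S \<subseteq> span F" "T \<subseteq> span F"
  shows "dim {x + y |x y. x \<in> S \<and> y \<in> T} + dim (S \<inter> T) = dim S + dim T"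
proof -
  obtain A where A: "A \<subseteq> S \<inter> T" "independent A" "S \<inter> T \<subseteq> span A" "card A = dim (S \<inter> T)"
    by (rule basis_exists)
  obtain C where C: "A \<subseteq> C" "C \<subseteq> S" "independent C" "S \<subseteq> span C"
    using A(1,2) by (meson maximal_independent_subset_extend le_infE)
  obtain D where D: "D \<subseteq> T" "independent D" "T \<subseteq> span D" "card D = dim T"
    by (rule basis_exists)
  have fin_C: "finite C"
    using independent_span_bound[OF assms(3) C(3)] C(2) assms(4) by blast
  have fin_D: "finite D"
    using independent_span_bound[OF assms(3) D(2)] D(1) assms(5) by blast
  \<comment> \<open>\<open>P\<close> extends a basis of \<open>S \<inter> T\<close> to one of \<open>S\<close>; its span meets \<open>T\<close> trivially,
    so it extends the basis \<open>D\<close> of \<open>T\<close> to a basis of \<open>S + T\<close>.\<close>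
  define P where "P = C - A"
  have indep_AP: "independent (A \<union> P)"
    using C(1,3) by (simp add: P_def Un_absorb1)
  have "span P \<subseteq> S"
    using C(2) span_minimal[OF _ assms(1)] unfolding P_def by blast
  moreover have "span D = T"
    using D(1,3) assms(2) by (rule span_subspace)
  ultimately have "span D \<inter> span P \<subseteq> span A \<inter> span P"
    using A(3) by blast
  also have "\<dots> = {0}"
    using indep_AP by (rule span_Int_span_of_independent) (simp add: P_def)
  finally have PD: "span D \<inter> span P = {0}"
    using span_zero by blast
  have indep: "independent (D \<union> P)"
    using independent_Un[OF D(2) _ PD] C(3) independent_mono by (auto simp: P_def)
  have disj: "D \<inter> P = {}"
  proof -
    have "D \<inter> P \<subseteq> {0}" using PD span_base by blast
    moreover have "0 \<notin> D" using D(2) dependent_zero by blast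
    ultimately show ?thesis by blast
  qed
  have "C \<subseteq> span (D \<union> P)"
    using A(1) D(3) span_mono[of D "D \<union> P"] span_base[of _ "D \<union> P"] unfolding P_def by blast
  then have "S \<subseteq> span (D \<union> P)"
    using C(4) span_minimal[OF _ subspace_span] by blast
  then have "dim {x + y |x y. x \<in> S \<and> y \<in> T} = card (D \<union> P)"
    using dim_sums_eq_card_of_basis_extension[OF assms(1,2) D(1,3) _ _ indep] C(2)
    unfolding P_def by blast
  also have "\<dots> = card D + (card C - card A)"
    using fin_C fin_D disj C(1) by (simp add: card_Un_disjoint P_def card_Diff_subset finite_subset)
  finally show ?thesis
    using A(4) D(4) basis_card_eq_dim[OF C(2,4,3)] C(1) fin_C card_mono[of C A] by linarith
qed

lemma dim_add_dim_Int_eq_of_subset_sums: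
  assumes "subspace Z" "subspace Z'" "subspace B" "Z' \<subseteq> Z"
    and cover: "Z \<subseteq> {x + y |x y. x \<in> Z' \<and> y \<in> B}"
    and "finite F" "Z \<subseteq> span F"
  shows "dim Z + dim (Z' \<inter> B) = dim Z' + dim (Z \<inter> B)"
proof -
  have sum_eq: "{x + y |x y. x \<in> Z' \<and> y \<in> Z \<inter> B} = Z"
  proof
    show "{x + y |x y. x \<in> Z' \<and> y \<in> Z \<inter> B} \<subseteq> Z"
      using assms(1,4) subspace_add by blast
    show "Z \<subseteq> {x + y |x y. x \<in> Z' \<and> y \<in> Z \<inter> B}"
    proof
      fix z assume "z \<in> Z"
      then obtain x y where "x \<in> Z'" "y \<in> B" "z = x + y" using cover by blast
      moreover have "y \<in> Z"
        using subspace_diff[OF assms(1) \<open>z \<in> Z\<close>, of x] \<open>x \<in> Z'\<close> assms(4) \<open>z = x + y\<close> by auto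
      ultimately show "z \<in> {x + y |x y. x \<in> Z' \<and> y \<in> Z \<inter> B}" by blast
    qed
  qed
  have "dim {x + y |x y. x \<in> Z' \<and> y \<in> Z \<inter> B} + dim (Z' \<inter> (Z \<inter> B)) = dim Z' + dim (Z \<inter> B)"
    by (rule dim_sums_Int_of_finite_span[OF assms(2) subspace_inter[OF assms(1,3)] assms(6)])
       (use assms(4,7) in blast)+
  moreover have "Z' \<inter> (Z \<inter> B) = Z' \<inter> B" using assms(4) by blast
  ultimately show ?thesis by (simp only: sum_eq)
qed

end

abbreviation fun_scale :: "'a::field \<Rightarrow> ('b \<Rightarrow> 'a) \<Rightarrow> 'b \<Rightarrow> 'a" where
  "fun_scale r c x \<equiv> r * c x"

global_interpretation fun_vs: vector_space "fun_scale :: 'a::field \<Rightarrow> ('b \<Rightarrow> 'a) \<Rightarrow> 'b \<Rightarrow> 'a"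
  by unfold_locales (auto simp: algebra_simps fun_eq_iff)

lemma fdim_eq_dim: "fdim (A :: 'a::field itself) S = fun_vs.dim S"
  by (simp add: fdim_def)

lemma boundary_add: "boundary K (c + c') = boundary K c + boundary K c'"
  by (auto simp: boundary_def fun_eq_iff sum.distrib algebra_simps)

lemma boundary_diff: "boundary K (c - c') = boundary K c - boundary K c'"
  by (auto simp: boundary_def fun_eq_iff sum_subtractf algebra_simps)

lemma boundary_scale: "boundary K (\<lambda>\<sigma>. r * c \<sigma>) = (\<lambda>\<tau>. r * boundary K c \<tau>)"
  by (auto simp: boundary_def fun_eq_iff sum_distrib_left algebra_simps)

lemma boundary_zero [simp]: "boundary K 0 = 0"
  by (auto simp: boundary_def fun_eq_iff)

lemma chains_subspace: "fun_vs.subspace (chains (A :: 'a::field itself) k K)"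
  unfolding fun_vs.subspace_def chains_def by auto (metis add.left_neutral)+

lemma cycles_subspace: "fun_vs.subspace (cycles (A :: 'a::field itself) k K)"
  using chains_subspace[of A k K]
  unfolding fun_vs.subspace_def cycles_def by (auto simp: boundary_add boundary_scale)

lemma boundaries_subspace: "fun_vs.subspace (boundaries (A :: 'a::field itself) k K)"
proof -
  have "boundary K (c + c') \<in> boundaries A k K" "boundary K (\<lambda>\<sigma>. r * c \<sigma>) \<in> boundaries A k K"
    if "c \<in> chains A (Suc k) K" "c' \<in> chains A (Suc k) K" for c c' and r :: 'a
    using that chains_subspace[of A "Suc k" K] unfolding boundaries_def fun_vs.subspace_def by blast+
  moreover have "boundary K 0 \<in> boundaries A k K"
    using chains_subspace[of A "Suc k" K] unfolding boundaries_def fun_vs.subspace_def by blast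
  ultimately show ?thesis
    unfolding fun_vs.subspace_def boundaries_def by (auto simp: boundary_add boundary_scale)
qed

lemma sum_fun_apply: "(\<Sum>\<sigma>\<in>K. g \<sigma>) \<rho> = (\<Sum>\<sigma>\<in>K. g \<sigma> \<rho>)"
  by (induction K rule: infinite_finite_induct) auto

lemma chains_subset_span:
  assumes "finite K"
  shows "chains (A :: 'a::field itself) k K \<subseteq> fun_vs.span ((\<lambda>\<sigma> \<rho>. if \<rho> = \<sigma> then 1 else 0) ` K)"
proof
  fix c :: "'b set \<Rightarrow> 'a" assume c: "c \<in> chains A k K"
  have "c = (\<Sum>\<sigma>\<in>K. (\<lambda>\<rho>. c \<sigma> * (if \<rho> = \<sigma> then 1 else 0)))"
  proof
    fix \<rho>
    have "(\<Sum>\<sigma>\<in>K. (\<lambda>\<rho>. c \<sigma> * (if \<rho> = \<sigma> then 1 else 0))) \<rho> = (if \<rho> \<in> K then c \<rho> else 0)"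
      using assms by (simp add: sum_fun_apply if_distrib[of "\<lambda>x. _ * x"] cong: if_cong)
    then show "c \<rho> = (\<Sum>\<sigma>\<in>K. (\<lambda>\<rho>. c \<sigma> * (if \<rho> = \<sigma> then 1 else 0))) \<rho>"
      using c by (auto simp: chains_def)
  qed
  also have "\<dots> \<in> fun_vs.span ((\<lambda>\<sigma> \<rho>. if \<rho> = \<sigma> then 1 else 0) ` K)"
    by (intro fun_vs.span_sum fun_vs.span_scale[where c = "c _", simplified] fun_vs.span_base) auto
  finally show "c \<in> fun_vs.span ((\<lambda>\<sigma> \<rho>. if \<rho> = \<sigma> then 1 else 0) ` K)" .
qed

lemma chains_mono: "K \<subseteq> K' \<Longrightarrow> chains A k K \<subseteq> chains A k K'"
  by (auto simp: chains_def)

lemma boundary_subcomplex: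
  assumes "finite (\<Union>K')" "K \<subseteq> K'" "c \<in> chains A k K"
  shows "boundary K c = boundary K' c"
proof
  fix \<tau>
  have "(\<Sum>x\<in>\<Union>K' - \<tau>. (-1) ^ card {y\<in>\<tau>. y < x} * c (insert x \<tau>))
      = (\<Sum>x\<in>\<Union>K - \<tau>. (-1) ^ card {y\<in>\<tau>. y < x} * c (insert x \<tau>))"
    by (rule sum.mono_neutral_right) (use assms in \<open>auto simp: chains_def\<close>)
  then show "boundary K c \<tau> = boundary K' c \<tau>"
    unfolding boundary_def by simp
qed

lemma cycles_mono:
  assumes "finite (\<Union>K')" "K \<subseteq> K'"
  shows "cycles A k K \<subseteq> cycles A k K'"
proof
  fix z assume "z \<in> cycles A k K"
  then have "z \<in> chains A k K" "boundary K z = 0" by (auto simp: cycles_def)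
  moreover have "boundary K' z = boundary K z"
    using boundary_subcomplex[OF assms calculation(1)] by simp
  ultimately show "z \<in> cycles A k K'"
    using assms(2) by (auto simp: cycles_def chains_def)
qed

lemma boundaries_mono:
  assumes "finite (\<Union>K')" "K \<subseteq> K'"
  shows "boundaries A k K \<subseteq> boundaries A k K'"
proof
  fix z assume "z \<in> boundaries A k K"
  then obtain c where "c \<in> chains A (Suc k) K" "z = boundary K c"
    by (auto simp: boundaries_def)
  moreover have "c \<in> chains A (Suc k) K'" using calculation(1) chains_mono[OF assms(2)] by blast
  ultimately show "z \<in> boundaries A k K'"
    using boundary_subcomplex[OF assms] by (auto simp: boundaries_def)
qed

definition downward_closed :: "'v set set \<Rightarrow> bool" where
  "downward_closed K \<longleftrightarrow> (\<forall>\<sigma>\<in>K. \<forall>\<tau>. \<tau> \<noteq> {} \<longrightarrow> \<tau> \<subseteq> \<sigma> \<longrightarrow> \<tau> \<in> K)"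

lemma downward_closed_flag_complex: "downward_closed (flag_complex E W)"
  unfolding downward_closed_def flag_complex_def by (auto intro: finite_subset)

lemma boundary_in_chains:
  assumes "downward_closed K" "c \<in> chains A (Suc k) K"
  shows "boundary K c \<in> chains A k K"
  unfolding chains_def
proof (intro CollectI allI impI)
  fix \<tau> assume "boundary K c \<tau> \<noteq> 0"
  then have "\<tau> \<noteq> {}" and "(\<Sum>x\<in>\<Union>K - \<tau>. (-1) ^ card {y\<in>\<tau>. y < x} * c (insert x \<tau>)) \<noteq> 0"
    unfolding boundary_def by (auto split: if_splits)
  then obtain x where x: "x \<notin> \<tau>" "c (insert x \<tau>) \<noteq> 0"
    by (metis (no_types, lifting) DiffD2 mult_zero_right sum.neutral)
  then have "insert x \<tau> \<in> K" "card (insert x \<tau>) = Suc (Suc k)"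
    using assms(2) unfolding chains_def by auto
  then show "\<tau> \<in> K \<and> card \<tau> = Suc k"
    using assms(1) \<open>\<tau> \<noteq> {}\<close> x(1) unfolding downward_closed_def
    by (metis card.infinite card_insert_disjoint finite_insert nat.inject nat.simps(3) subset_insertI)
qed

lemma boundary_sign_insert:
  fixes x y :: "'v::linorder"
  assumes "finite \<tau>" "x \<notin> \<tau>" "y \<notin> \<tau>" "x < y"
  shows "(-1::'a::field) ^ card {z\<in>insert x \<tau>. z < y} = - ((-1) ^ card {z\<in>\<tau>. z < y})"
    and "(-1::'a::field) ^ card {z\<in>insert y \<tau>. z < x} = (-1) ^ card {z\<in>\<tau>. z < x}"
proof -
  have "{z\<in>insert x \<tau>. z < y} = insert x {z\<in>\<tau>. z < y}" using assms by auto
  then show "(-1::'a) ^ card {z\<in>insert x \<tau>. z < y} = - ((-1) ^ card {z\<in>\<tau>. z < y})"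
    using assms by simp
  have "{z\<in>insert y \<tau>. z < x} = {z\<in>\<tau>. z < x}" using assms by auto
  then show "(-1::'a) ^ card {z\<in>insert y \<tau>. z < x} = (-1) ^ card {z\<in>\<tau>. z < x}" by simp
qed

lemma sum_off_diagonal_antisymmetric:
  fixes F :: "'v::linorder \<Rightarrow> 'v \<Rightarrow> 'a::ab_group_add"
  assumes "finite A" "\<And>x y. x \<in> A \<Longrightarrow> y \<in> A \<Longrightarrow> x < y \<Longrightarrow> F y x = - F x y"
  shows "(\<Sum>x\<in>A. \<Sum>y\<in>A - {x}. F x y) = 0"
proof -
  define U where "U x y = (if x < y then F x y else 0)" for x y
  define L where "L x y = (if y < x then F x y else 0)" for x y
  have "(\<Sum>y\<in>A - {x}. F x y) = (\<Sum>y\<in>A. U x y + L x y)" if "x \<in> A" for x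
  proof -
    have "(\<Sum>y\<in>A. U x y + L x y) = (\<Sum>y\<in>A - {x}. U x y + L x y)"
      by (rule sum.mono_neutral_right) (use assms(1) in \<open>auto simp: U_def L_def\<close>)
    also have "\<dots> = (\<Sum>y\<in>A - {x}. F x y)"
      by (rule sum.cong) (auto simp: U_def L_def)
    finally show ?thesis ..
  qed
  then have "(\<Sum>x\<in>A. \<Sum>y\<in>A - {x}. F x y) = (\<Sum>x\<in>A. \<Sum>y\<in>A. U x y) + (\<Sum>x\<in>A. \<Sum>y\<in>A. L x y)"
    by (simp add: sum.distrib)
  also have "(\<Sum>x\<in>A. \<Sum>y\<in>A. L x y) = (\<Sum>y\<in>A. \<Sum>x\<in>A. L x y)"
    by (rule sum.swap)
  also have "\<dots> = (\<Sum>y\<in>A. \<Sum>x\<in>A. - U y x)"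
    using assms(2) by (intro sum.cong refl) (auto simp: U_def L_def)
  also have "\<dots> = - (\<Sum>x\<in>A. \<Sum>y\<in>A. U x y)"
    by (simp add: sum_negf)
  finally show ?thesis by simp
qed

lemma boundary_boundary:
  fixes c :: "'v::linorder set \<Rightarrow> 'a::field"
  assumes "finite (\<Union>K)" "c \<in> chains A k K"
  shows "boundary K (boundary K c) = 0"
proof
  fix \<tau>
  show "boundary K (boundary K c) \<tau> = 0 \<tau>"
  proof (cases "\<tau> \<noteq> {} \<and> finite \<tau>")
    case False
    moreover have "boundary K c (insert x \<tau>) = 0" if "infinite \<tau>" for x
      using that assms(2) by (auto simp: boundary_def chains_def intro!: sum.neutral)
    ultimately show ?thesis by (auto simp: boundary_def)
  next
    case True
    define F where "F x y = (-1::'a) ^ card {z\<in>\<tau>. z < x} * ((-1) ^ card {z\<in>insert x \<tau>. z < y}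
         * c (insert y (insert x \<tau>)))" for x y
    have "boundary K (boundary K c) \<tau> = (\<Sum>x\<in>\<Union>K - \<tau>. \<Sum>y\<in>\<Union>K - \<tau> - {x}. F x y)"
      unfolding boundary_def using True
      by (auto simp: F_def sum_distrib_left Diff_insert2[symmetric] intro!: sum.cong)
    also have "\<dots> = 0"
    proof (rule sum_off_diagonal_antisymmetric)
      show "finite (\<Union>K - \<tau>)" using assms(1) by simp
      fix x y assume "x \<in> \<Union>K - \<tau>" "y \<in> \<Union>K - \<tau>" "x < y"
      then show "F y x = - F x y"
        using boundary_sign_insert[of \<tau> x y, where 'a='a] True by (simp add: F_def insert_commute)
    qed
    finally show ?thesis by simp
  qed
qed

definition deletion :: "'v set set \<Rightarrow> 'v \<Rightarrow> 'v set set" where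
  "deletion K u = {\<sigma> \<in> K. u \<notin> \<sigma>}"

lemma chains_deletion_iff:
  "c \<in> chains A k (deletion K u) \<longleftrightarrow> c \<in> chains A k K \<and> (\<forall>\<sigma>. u \<in> \<sigma> \<longrightarrow> c \<sigma> = 0)"
  by (auto simp: chains_def deletion_def)

lemma deletion_subset: "deletion K u \<subseteq> K"
  by (auto simp: deletion_def)

lemma deletion_mono: "K \<subseteq> K' \<Longrightarrow> deletion K u \<subseteq> deletion K' u"
  by (auto simp: deletion_def)

lemma finite_flag_complex: "finite W \<Longrightarrow> finite (flag_complex E W)"
  by (rule finite_subset[of _ "Pow W"]) (auto simp: flag_complex_def)

lemma finite_Union_flag_complex: "finite W \<Longrightarrow> finite (\<Union>(flag_complex E W))"
  by (rule finite_subset[of _ W]) (auto simp: flag_complex_def)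

lemma flag_complex_mono: "W \<subseteq> W' \<Longrightarrow> flag_complex E W \<subseteq> flag_complex E W'"
  by (auto simp: flag_complex_def)

lemma deletion_flag_complex_of_notin: "u \<notin> W \<Longrightarrow> deletion (flag_complex E W) u = flag_complex E W"
  by (auto simp: deletion_def flag_complex_def)

lemma flag_complex_del_vertex:
  "flag_complex (del_vertex_E E u) {w \<in> del_vertex_V V u. P w} = deletion (flag_complex E {w \<in> V. P w}) u"
  unfolding flag_complex_def del_vertex_E_def del_vertex_V_def deletion_def by auto

text \<open>The face \<open>\<sigma> - {v}\<close> has \<open>\<sigma>\<close> as its only coface in the support of \<open>c\<close>, so the
  boundary there is \<open>\<plusminus>c \<sigma>\<close>.\<close>
lemma chain_vanishes_on_star:
  assumes "finite (\<Union>K)" "c \<in> chains A k K" "u \<noteq> v"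
    and through_v: "\<And>\<tau>. c \<tau> \<noteq> 0 \<Longrightarrow> u \<in> \<tau> \<Longrightarrow> v \<in> \<tau>"
    and boundary_0: "\<And>\<tau>. u \<in> \<tau> \<Longrightarrow> boundary K c \<tau> = 0"
    and "u \<in> \<sigma>"
  shows "c \<sigma> = 0"
proof (rule ccontr)
  assume nz: "c \<sigma> \<noteq> 0"
  define \<tau> where "\<tau> = \<sigma> - {v}"
  have v\<sigma>: "v \<in> \<sigma>" using through_v nz \<open>u \<in> \<sigma>\<close> by blast
  then have \<sigma>_eq: "insert v \<tau> = \<sigma>" by (auto simp: \<tau>_def)
  have \<tau>: "u \<in> \<tau>" "v \<notin> \<tau>" using \<open>u \<in> \<sigma>\<close> assms(3) by (auto simp: \<tau>_def)
  have "v \<in> \<Union>K - \<tau>"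
    using assms(2) nz v\<sigma> \<tau>(2) by (auto simp: chains_def)
  have "0 = boundary K c \<tau>" using boundary_0 \<tau>(1) by simp
  also have "\<dots> = (\<Sum>x\<in>\<Union>K - \<tau>. (-1) ^ card {y\<in>\<tau>. y < x} * c (insert x \<tau>))"
    using \<tau> by (auto simp: boundary_def)
  also have "\<dots> = (-1) ^ card {y\<in>\<tau>. y < v} * c (insert v \<tau>)
      + (\<Sum>x\<in>\<Union>K - \<tau> - {v}. (-1) ^ card {y\<in>\<tau>. y < x} * c (insert x \<tau>))"
    using \<open>v \<in> \<Union>K - \<tau>\<close> assms(1) by (simp add: sum.remove)
  also have "(\<Sum>x\<in>\<Union>K - \<tau> - {v}. (-1) ^ card {y\<in>\<tau>. y < x} * c (insert x \<tau>)) = 0"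
    using \<tau> through_v by (intro sum.neutral) auto
  finally show False using nz \<sigma>_eq by simp
qed

lemma superlevel_filtration_del_vertex:
  "superlevel_filtration (del_vertex_V V u) (del_vertex_E E u) f \<alpha> m j
     = deletion (superlevel_filtration V E f \<alpha> m j) u"
  unfolding superlevel_filtration_def by (rule flag_complex_del_vertex)

lemma degree_eq_card_adjacent:
  assumes "simple_graph V E"
  shows "degree E w = card {x. {w, x} \<in> E}"
proof -
  have "{e \<in> E. w \<in> e} = (\<lambda>x. {w, x}) ` {x. {w, x} \<in> E}"
  proof (intro equalityI subsetI)
    fix e assume e: "e \<in> {e \<in> E. w \<in> e}"
    then have "card e = 2" using assms by (auto simp: simple_graph_def)
    then obtain a b where ab: "e = {a, b}" by (meson card_2_iff)
    then have "e = {w, if a = w then b else a}" using e by auto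
    then show "e \<in> (\<lambda>x. {w, x}) ` {x. {w, x} \<in> E}" using e by blast
  qed auto
  moreover have "inj_on (\<lambda>x. {w, x}) {x. {w, x} \<in> E}"
    by (rule inj_onI) (auto simp: doubleton_eq_iff)
  ultimately show ?thesis
    unfolding degree_def by (simp add: card_image)
qed

locale dominated_vertex =
  fixes E :: "'v::linorder set set" and u v :: 'v
  assumes u_neq_v: "u \<noteq> v" and edge_uv: "{u, v} \<in> E"
    and neighbour_dominated: "\<And>x. {u, x} \<in> E \<Longrightarrow> x = v \<or> {v, x} \<in> E"
begin

lemma insert_v_flag_complex:
  assumes "\<sigma> \<in> flag_complex E W" "u \<in> \<sigma>" "v \<in> W"
  shows "insert v \<sigma> \<in> flag_complex E W"
proof -
  have "{v, y} \<in> E" if "y \<in> \<sigma>" "y \<noteq> v" for y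
  proof (cases "y = u")
    case True
    then show ?thesis using edge_uv by (simp add: insert_commute)
  next
    case False
    then have "{u, y} \<in> E" using assms(1,2) that by (auto simp: flag_complex_def)
    then show ?thesis using neighbour_dominated that(2) by blast
  qed
  then show ?thesis
    using assms(1,3) by (auto simp: flag_complex_def insert_commute)
qed

text \<open>The cone with apex \<open>v\<close> over the simplices of \<open>c\<close> through \<open>u\<close>; the sign is chosen so
  that \<open>\<partial>(cone c)\<close> agrees with \<open>c\<close> on every simplex containing \<open>u\<close> but not \<open>v\<close>.\<close>
definition cone :: "('v set \<Rightarrow> 'a::field) \<Rightarrow> 'v set \<Rightarrow> 'a" where
  "cone c \<rho> = (if u \<in> \<rho> \<and> v \<in> \<rho> then (-1) ^ card {y\<in>\<rho> - {v}. y < v} * c (\<rho> - {v}) else 0)"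

lemma cone_in_chains:
  assumes "v \<in> W" "c \<in> chains A k (flag_complex E W)"
  shows "cone c \<in> chains A (Suc k) (flag_complex E W)"
  unfolding chains_def
proof (intro CollectI allI impI)
  fix \<rho> assume "cone c \<rho> \<noteq> 0"
  then have \<rho>: "u \<in> \<rho>" "v \<in> \<rho>" "c (\<rho> - {v}) \<noteq> 0" by (auto simp: cone_def split: if_splits)
  then have "\<rho> - {v} \<in> flag_complex E W" "card (\<rho> - {v}) = Suc k"
    using assms(2) by (auto simp: chains_def)
  moreover have "insert v (\<rho> - {v}) = \<rho>" using \<rho>(2) by blast
  ultimately have "\<rho> \<in> flag_complex E W"
    using insert_v_flag_complex[of "\<rho> - {v}" W] \<rho>(1) u_neq_v assms(1) by auto
  then show "\<rho> \<in> flag_complex E W \<and> card \<rho> = Suc (Suc k)"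
    using \<open>card (\<rho> - {v}) = Suc k\<close> \<rho>(2) by (auto simp: flag_complex_def card_Diff_singleton)
qed

lemma boundary_cone:
  assumes "finite W" "v \<in> W" "u \<in> \<tau>" "v \<notin> \<tau>"
  shows "boundary (flag_complex E W) (cone c) \<tau> = (c \<tau> :: 'a::field)"
proof -
  let ?K = "flag_complex E W"
  have "v \<in> \<Union>?K - \<tau>"
    using assms(2,4) by (auto simp: flag_complex_def intro!: UnionI[of "{v}"])
  have "boundary ?K (cone c) \<tau> = (\<Sum>x\<in>\<Union>?K - \<tau>. (-1) ^ card {y\<in>\<tau>. y < x} * cone c (insert x \<tau>))"
    using assms(3) by (auto simp: boundary_def)
  also have "\<dots> = (-1) ^ card {y\<in>\<tau>. y < v} * cone c (insert v \<tau>)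
      + (\<Sum>x\<in>\<Union>?K - \<tau> - {v}. (-1) ^ card {y\<in>\<tau>. y < x} * cone c (insert x \<tau>))"
    using \<open>v \<in> \<Union>?K - \<tau>\<close> finite_Union_flag_complex[OF assms(1)] by (simp add: sum.remove)
  also have "(\<Sum>x\<in>\<Union>?K - \<tau> - {v}. (-1) ^ card {y\<in>\<tau>. y < x} * cone c (insert x \<tau>)) = 0"
    using assms(4) by (intro sum.neutral) (auto simp: cone_def)
  also have "cone c (insert v \<tau>) = (-1) ^ card {y\<in>\<tau>. y < v} * c \<tau>"
    using assms(3,4) by (simp add: cone_def)
  finally show ?thesis
    by (simp add: mult.assoc[symmetric] power_mult_distrib[symmetric])
qed

lemma chain_minus_boundary_cone_in_deletion:
  assumes "finite W" "v \<in> W" "c \<in> chains A k (flag_complex E W)"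
    and boundary_0: "\<And>\<tau>. u \<in> \<tau> \<Longrightarrow> boundary (flag_complex E W) c \<tau> = 0"
  shows "c - boundary (flag_complex E W) (cone c) \<in> chains A k (deletion (flag_complex E W) u)"
proof -
  let ?K = "flag_complex E W"
  let ?r = "c - boundary ?K (cone c)"
  have cone: "cone c \<in> chains A (Suc k) ?K"
    using assms(2,3) by (rule cone_in_chains)
  have r: "?r \<in> chains A k ?K"
    by (rule fun_vs.subspace_diff[OF chains_subspace assms(3)
          boundary_in_chains[OF downward_closed_flag_complex cone]])
  have boundary_r: "boundary ?K ?r = boundary ?K c"
    using boundary_boundary[OF finite_Union_flag_complex[OF assms(1)] cone]
    by (simp add: boundary_diff)
  have "?r \<sigma> = 0" if "u \<in> \<sigma>" for \<sigma>
  proof (rule chain_vanishes_on_star[OF finite_Union_flag_complex[OF assms(1)] r u_neq_v _ _ that])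
    fix \<tau> assume "?r \<tau> \<noteq> 0" "u \<in> \<tau>"
    show "v \<in> \<tau>"
    proof (rule ccontr)
      assume "v \<notin> \<tau>"
      with boundary_cone[OF assms(1,2) \<open>u \<in> \<tau>\<close> this, of c] \<open>?r \<tau> \<noteq> 0\<close> show False by simp
    qed
  next
    fix \<tau> assume "u \<in> \<tau>"
    then show "boundary ?K ?r \<tau> = 0" by (simp only: boundary_r boundary_0)
  qed
  then show ?thesis
    using r by (simp add: chains_deletion_iff)
qed

lemma cycle_homologous_in_deletion:
  assumes "finite W" "u \<in> W \<Longrightarrow> v \<in> W" "z \<in> cycles A k (flag_complex E W)"
  obtains d where "d \<in> chains A (Suc k) (flag_complex E W)"
    "z - boundary (flag_complex E W) d \<in> cycles A k (deletion (flag_complex E W) u)"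
proof (cases "u \<in> W")
  case True
  let ?K = "flag_complex E W"
  have z: "z \<in> chains A k ?K" "boundary ?K z = 0" using assms(3) by (auto simp: cycles_def)
  have cone: "cone z \<in> chains A (Suc k) ?K"
    using cone_in_chains[OF assms(2)[OF True] z(1)] .
  have del: "z - boundary ?K (cone z) \<in> chains A k (deletion ?K u)"
    using chain_minus_boundary_cone_in_deletion[OF assms(1) assms(2)[OF True] z(1)] z(2) by simp
  have "boundary (deletion ?K u) (z - boundary ?K (cone z)) = boundary ?K (z - boundary ?K (cone z))"
    using boundary_subcomplex[OF finite_Union_flag_complex[OF assms(1)] deletion_subset del] .
  also have "\<dots> = 0"
    using z(2) boundary_boundary[OF finite_Union_flag_complex[OF assms(1)] cone]
    by (simp add: boundary_diff)
  finally show ?thesis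
    using that[OF cone] del by (simp add: cycles_def)
next
  case False
  then show ?thesis
    using that[of 0] assms(3) by (simp add: deletion_flag_complex_of_notin chains_def)
qed

lemma boundary_in_deletion:
  assumes "finite W" "u \<in> W \<Longrightarrow> v \<in> W"
    and "z \<in> chains A k (deletion (flag_complex E W) u)" "z \<in> boundaries A k (flag_complex E W)"
  shows "z \<in> boundaries A k (deletion (flag_complex E W) u)"
proof (cases "u \<in> W")
  case True
  let ?K = "flag_complex E W"
  obtain c where c: "c \<in> chains A (Suc k) ?K" "boundary ?K c = z"
    using assms(4) by (auto simp: boundaries_def)
  have "boundary ?K c \<tau> = 0" if "u \<in> \<tau>" for \<tau>
    using assms(3) that c(2) by (simp add: chains_deletion_iff)
  then have del: "c - boundary ?K (cone c) \<in> chains A (Suc k) (deletion ?K u)"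
    using chain_minus_boundary_cone_in_deletion[OF assms(1) assms(2)[OF True] c(1)] by blast
  have "boundary (deletion ?K u) (c - boundary ?K (cone c)) = boundary ?K (c - boundary ?K (cone c))"
    using boundary_subcomplex[OF finite_Union_flag_complex[OF assms(1)] deletion_subset del] .
  also have "\<dots> = z"
    using c(2) boundary_boundary[OF finite_Union_flag_complex[OF assms(1)]
        cone_in_chains[OF assms(2)[OF True] c(1)]]
    by (simp add: boundary_diff)
  finally show ?thesis
    using del unfolding boundaries_def by blast
next
  case False
  then show ?thesis using assms(4) by (simp add: deletion_flag_complex_of_notin)
qed

lemma cycles_subset_sums_deletion_boundaries:
  assumes "finite W'" "W \<subseteq> W'" "u \<in> W \<Longrightarrow> v \<in> W"
  shows "cycles A k (flag_complex E W)
    \<subseteq> {x + y |x y. x \<in> cycles A k (deletion (flag_complex E W) u) \<and> y \<in> boundaries A k (flag_complex E W')}"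
proof
  fix z assume "z \<in> cycles A k (flag_complex E W)"
  moreover have "finite W" using assms(1,2) by (rule finite_subset[rotated])
  ultimately obtain d where d: "d \<in> chains A (Suc k) (flag_complex E W)"
    "z - boundary (flag_complex E W) d \<in> cycles A k (deletion (flag_complex E W) u)"
    using cycle_homologous_in_deletion assms(3) by metis
  have "boundary (flag_complex E W) d \<in> boundaries A k (flag_complex E W')"
    using d(1) boundaries_mono[OF finite_Union_flag_complex[OF assms(1)] flag_complex_mono[OF assms(2)]]
    unfolding boundaries_def by blast
  with d(2) show "z \<in> {x + y |x y. x \<in> cycles A k (deletion (flag_complex E W) u)
      \<and> y \<in> boundaries A k (flag_complex E W')}"
    by (intro CollectI exI[of _ "z - boundary (flag_complex E W) d"]
        exI[of _ "boundary (flag_complex E W) d"]) auto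
qed

lemma cycles_deletion_Int_boundaries:
  assumes "finite W'" "W \<subseteq> W'" "u \<in> W' \<Longrightarrow> v \<in> W'"
  shows "cycles A k (deletion (flag_complex E W) u) \<inter> boundaries A k (flag_complex E W')
    = cycles A k (deletion (flag_complex E W) u) \<inter> boundaries A k (deletion (flag_complex E W') u)"
proof -
  have "cycles A k (deletion (flag_complex E W) u) \<subseteq> chains A k (deletion (flag_complex E W') u)"
    using chains_mono[OF deletion_mono[OF flag_complex_mono[OF assms(2)]]] unfolding cycles_def by blast
  moreover have "boundaries A k (deletion (flag_complex E W') u) \<subseteq> boundaries A k (flag_complex E W')"
    using boundaries_mono[OF finite_Union_flag_complex[OF assms(1)] deletion_subset] .
  ultimately show ?thesis
    using boundary_in_deletion[OF assms(1,3)] by blast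
qed

lemma persistent_rank_deletion:
  fixes A :: "'a::field itself"
  assumes "finite W'" "W \<subseteq> W'" "u \<in> W \<Longrightarrow> v \<in> W" "u \<in> W' \<Longrightarrow> v \<in> W'"
  shows "int (fdim A (cycles A k (flag_complex E W)))
           - int (fdim A (cycles A k (flag_complex E W) \<inter> boundaries A k (flag_complex E W')))
       = int (fdim A (cycles A k (deletion (flag_complex E W) u)))
           - int (fdim A (cycles A k (deletion (flag_complex E W) u)
                 \<inter> boundaries A k (deletion (flag_complex E W') u)))"
proof -
  let ?Z = "cycles A k (flag_complex E W)" and ?Z' = "cycles A k (deletion (flag_complex E W) u)"
    and ?B = "boundaries A k (flag_complex E W')"
  have fin: "finite W" using assms(1,2) by (rule finite_subset[rotated])
  have "?Z' \<subseteq> ?Z"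
    using cycles_mono[OF finite_Union_flag_complex[OF fin] deletion_subset] .
  moreover have "?Z \<subseteq> fun_vs.span ((\<lambda>\<sigma> \<rho>. if \<rho> = \<sigma> then 1 else 0) ` flag_complex E W)"
    using chains_subset_span[OF finite_flag_complex[OF fin]] unfolding cycles_def by blast
  ultimately have "fun_vs.dim ?Z + fun_vs.dim (?Z' \<inter> ?B) = fun_vs.dim ?Z' + fun_vs.dim (?Z \<inter> ?B)"
    by (intro fun_vs.dim_add_dim_Int_eq_of_subset_sums[OF cycles_subspace cycles_subspace
          boundaries_subspace _ cycles_subset_sums_deletion_boundaries[OF assms(1-3)]])
      (use finite_flag_complex[OF fin] in auto)
  then show ?thesis
    using cycles_deletion_Int_boundaries[OF assms(1,2,4), of A k] unfolding fdim_eq_dim by simp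
qed

lemma degree_le:
  assumes "simple_graph V E"
  shows "degree E u \<le> degree E v"
proof -
  define N where "N w = {x. {w, x} \<in> E}" for w
  have "N v \<subseteq> V"
    using assms unfolding N_def simple_graph_def by blast
  then have fin_v: "finite (N v)"
    using assms finite_subset by (auto simp: simple_graph_def)
  have loopless: "{w, w} \<notin> E" for w
    using assms unfolding simple_graph_def by fastforce
  have sub: "N u - {v} \<subseteq> N v - {u}"
  proof
    fix x assume "x \<in> N u - {v}"
    then have "{u, x} \<in> E" "x \<noteq> v" by (auto simp: N_def)
    then have "{v, x} \<in> E" "x \<noteq> u" using neighbour_dominated loopless by blast+
    then show "x \<in> N v - {u}" by (simp add: N_def)
  qed
  then have "finite (N u - {v})"
    using fin_v by (meson finite_Diff finite_subset)
  then have fin_u: "finite (N u)" by simp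
  have "v \<in> N u" "u \<in> N v"
    using edge_uv by (simp_all add: N_def insert_commute)
  then have "card (N u) = Suc (card (N u - {v}))" "card (N v) = Suc (card (N v - {u}))"
    using card_Suc_Diff1[OF fin_u] card_Suc_Diff1[OF fin_v] by (simp_all del: card_Diff_insert)
  moreover have "card (N u - {v}) \<le> card (N v - {u})"
    using sub fin_v by (intro card_mono) auto
  ultimately show ?thesis
    using degree_eq_card_adjacent[OF assms] by (simp add: N_def)
qed

lemma PD_v_del_vertex:
  assumes "finite V" "v \<in> V" "\<forall>i<m. \<alpha> i < \<alpha> (Suc i)" "f u \<le> f v"
  shows "PD_v A k V E f \<alpha> m = PD_v A k (del_vertex_V V u) (del_vertex_E E u) f \<alpha> m"
proof -
  have pers_betti_eq: "pers_betti A k (superlevel_filtration V E f \<alpha> m) m i j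
      = pers_betti A k (superlevel_filtration (del_vertex_V V u) (del_vertex_E E u) f \<alpha> m) m i j"
    for i j
  proof (cases "i \<le> j \<and> j \<le> m")
    case True
    let ?W = "\<lambda>i. {w \<in> V. \<alpha> (m - i) \<le> f w}"
    have "\<alpha> (m - j) \<le> \<alpha> (m - i)"
      by (rule lift_Suc_mono_le_ivl[where N = "{..<m}"]) (use assms(3) True in auto)
    then have sub: "?W i \<subseteq> ?W j" by auto
    have through_v: "u \<in> ?W l \<Longrightarrow> v \<in> ?W l" for l
      using assms(2,4) by auto
    have fin: "finite (?W j)" using assms(1) by simp
    show ?thesis
      unfolding pers_betti_def superlevel_filtration_del_vertex
      unfolding superlevel_filtration_def
      using persistent_rank_deletion[OF fin sub through_v through_v, of A k] True by simp
  next
    case False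
    then show ?thesis unfolding pers_betti_def by (simp only: if_not_P if_False)
  qed
  show ?thesis
    unfolding PD_v_def persistence_diagram_def pers_betti_eq ..
qed

end

lemma dominated_vertex_if_dominated_by:
  assumes "dominated_by V E u v"
  shows "dominated_vertex E u v"
proof
  have u_v: "u \<noteq> v" and nbhd: "closed_nbhd E u \<subseteq> closed_nbhd E v"
    using assms by (auto simp: dominated_by_def)
  show "u \<noteq> v" by (rule u_v)
  have "u \<in> closed_nbhd E v" using nbhd by (auto simp: closed_nbhd_def)
  then show "{u, v} \<in> E" using u_v by (auto simp: closed_nbhd_def insert_commute)
  show "x = v \<or> {v, x} \<in> E" if "{u, x} \<in> E" for x
    using that nbhd by (auto simp: closed_nbhd_def)
qed

theorem mainTheorem5:
  fixes V :: "'v::linorder set" and E :: "'v set set" and f :: "'v \<Rightarrow> real"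
    and \<alpha> :: "nat \<Rightarrow> real" and m :: nat and u v :: 'v
  assumes "simple_graph V E"
    and "dominated_by V E u v"
  shows "(thresholds_for V f \<alpha> m \<and> f u \<le> f v \<longrightarrow>
           (\<forall>k. PD_v TYPE('a::field) k V E f \<alpha> m
                 = PD_v TYPE('a) k (del_vertex_V V u) (del_vertex_E E u) f \<alpha> m))
       \<and> (thresholds_for V (degree E) \<alpha> m \<longrightarrow>
           (\<forall>k. PD_v TYPE('a) k V E (degree E) \<alpha> m
                 = PD_v TYPE('a) k (del_vertex_V V u) (del_vertex_E E u) (degree E) \<alpha> m))"
proof -
  interpret dominated_vertex E u v
    using assms(2) by (rule dominated_vertex_if_dominated_by)
  have "finite V" using assms(1) by (simp add: simple_graph_def)
  moreover have "v \<in> V" using assms(2) by (simp add: dominated_by_def)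
  ultimately show ?thesis
    using PD_v_del_vertex degree_le[OF assms(1)] unfolding thresholds_for_def by blast
qed

end
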